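(* Let $p\geq 1$ and let $A$ be a non-empty set. Then for each $g\in\ell^p(A)$, the set $$\Gamma_g:=\big\{f\in\ell^p(A):\ |f|\geq|g|\big\}$$ is not $\sigma$-porous in $\ell^p(A)$.
   Context: $\ell^p(A)$ is $L^p$ of $A$ with counting measure. Porosity: Let $X$ be a metric space and $0<\lambda<1$. A set $E\subseteq X$ is $\lambda$-porous at $x\in E$ if for each $\delta>0$ there is $y\in B(x;\delta)\setminus\{x\}$ with $B(y;\lambda\, d(x,y))\cap E=\varnothing$; $E$ is $\lambda$-porous if it is $\lambda$-porous at each of its points; $E$ is $\sigma$-$\lambda$-porous if it is a countable union of $\lambda$-porous subsets of $X$. A set is called $\sigma$-porous if it is $\sigma$-$\lambda$-porous for some $\lambda\in(0,1)$; "not $\sigma$-porous" means not $\sigma$-$\lambda$-porous for any $\lambda\in(0,1)$. *)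

theory Defs
  imports "HOL-Analysis.Analysis"
begin

definition lp :: "real \<Rightarrow> 'a set \<Rightarrow> ('a \<Rightarrow> real) set" where
  "lp p A = {f. (\<forall>x. x \<notin> A \<longrightarrow> f x = 0) \<and> (\<lambda>x. \<bar>f x\<bar> powr p) summable_on A}"

definition lp_dist :: "real \<Rightarrow> 'a set \<Rightarrow> ('a \<Rightarrow> real) \<Rightarrow> ('a \<Rightarrow> real) \<Rightarrow> real" where
  "lp_dist p A f g = (infsum (\<lambda>x. \<bar>f x - g x\<bar> powr p) A) powr (1 / p)"

definition porous_at :: "'b set \<Rightarrow> ('b \<Rightarrow> 'b \<Rightarrow> real) \<Rightarrow> real \<Rightarrow> 'b set \<Rightarrow> 'b \<Rightarrow> bool" where
  "porous_at X d lam E x \<longleftrightarrow>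
     (\<forall>\<delta>>0. \<exists>y\<in>X. d x y < \<delta> \<and> y \<noteq> x \<and>
        {z\<in>X. d y z < lam * d x y} \<inter> E = {})"

definition porous :: "'b set \<Rightarrow> ('b \<Rightarrow> 'b \<Rightarrow> real) \<Rightarrow> real \<Rightarrow> 'b set \<Rightarrow> bool" where
  "porous X d lam E \<longleftrightarrow> E \<subseteq> X \<and> (\<forall>x\<in>E. porous_at X d lam E x)"

definition sigma_porous :: "'b set \<Rightarrow> ('b \<Rightarrow> 'b \<Rightarrow> real) \<Rightarrow> real \<Rightarrow> 'b set \<Rightarrow> bool" where
  "sigma_porous X d lam E \<longleftrightarrow>
     (\<exists>F :: nat \<Rightarrow> 'b set. (\<forall>n. porous X d lam (F n)) \<and> E = (\<Union>n. F n))"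

end

theory Submission
  imports Defs
begin

text \<open>
  We work with \<^emph>\<open>floor balls\<close>: closed balls
  \<open>B(c, r)\<close> cut down to the functions with \<open>|f| \<ge> \<phi>\<close> on \<open>A\<close>, for floors \<open>\<phi> \<in> \<ell>\<^sup>p\<close> with
  \<open>\<phi> \<le> |c|\<close>. Given such a ball and a \<open>\<lambda>\<close>-porous set \<open>E\<close>, there is a smaller floor ball inside it
  missing \<open>E\<close>. Indeed, raise the floor by the factor \<open>1 + 1/\<lambda>\<close> outside finitely many
  coordinates: lifting a point \<open>y\<close> pointwise onto the old floor then moves it by at most
  \<open>\<lambda>/(1 + \<lambda>)\<close> times its distance to any point of the raised floor, so every hole of ratio \<open>\<lambda>\<close>
  next to a point of \<open>E\<close> there meets the old floor ball, and one refines inside such a hole.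
  Doing this in turn for the countably many porous pieces gives nested floor balls with radii
  tending to \<open>0\<close>; by completeness of \<open>\<ell>\<^sup>p\<close> they share a point, which lies in \<open>\<Gamma>\<^sub>g\<close> but in no piece.
\<close>

section \<open>Elementary inequalities\<close>

lemma abs_powr_convex_comb:
  fixes u v t p :: real
  assumes p: "1 \<le> p" and t: "0 \<le> t" "t \<le> 1"
  shows "\<bar>t * u + (1 - t) * v\<bar> powr p \<le> t * \<bar>u\<bar> powr p + (1 - t) * \<bar>v\<bar> powr p"
proof -
  have "\<bar>t * u + (1 - t) * v\<bar> \<le> t * \<bar>u\<bar> + (1 - t) * \<bar>v\<bar>"
    using abs_triangle_ineq[of "t * u" "(1 - t) * v"] t by (simp add: abs_mult)
  then have "\<bar>t * u + (1 - t) * v\<bar> powr p \<le> (t * \<bar>u\<bar> + (1 - t) * \<bar>v\<bar>) powr p"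
    using p by (intro powr_mono2) auto
  also have "\<dots> \<le> t * \<bar>u\<bar> powr p + (1 - t) * \<bar>v\<bar> powr p"
  proof -
    have shrink: "(s * a) powr p \<le> s * a powr p" if "0 \<le> s" "s \<le> 1" "0 \<le> a" for s a :: real
    proof (cases "s = 0")
      case False
      then have "s powr p \<le> s" using powr_le_one_le[of s p] p that by simp
      then show ?thesis using that by (simp add: powr_mult mult_right_mono)
    qed (use p in simp)
    consider "u = 0" | "v = 0" | "u \<noteq> 0" "v \<noteq> 0" by blast
    then show ?thesis
    proof cases
      case 1
      then show ?thesis using shrink[of "1 - t" "\<bar>v\<bar>"] t p by simp
    next
      case 2
      then show ?thesis using shrink[of t "\<bar>u\<bar>"] t p by simp
    next
      case 3
      then have "((1 - t) * \<bar>v\<bar> + t * \<bar>u\<bar>) powr p \<le> (1 - t) * \<bar>v\<bar> powr p + t * \<bar>u\<bar> powr p"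
        using convex_onD[OF powr_convex[OF p], of t "\<bar>v\<bar>" "\<bar>u\<bar>"] t by simp
      then show ?thesis by (metis add.commute)
    qed
  qed
  finally show ?thesis .
qed

lemma summable_on_powr_dominated:
  fixes u h :: "'a \<Rightarrow> real"
  assumes "(\<lambda>x. \<bar>h x\<bar> powr p) summable_on A" "0 \<le> p" "\<And>x. x \<in> A \<Longrightarrow> \<bar>u x\<bar> \<le> \<bar>h x\<bar>"
  shows "(\<lambda>x. \<bar>u x\<bar> powr p) summable_on A"
proof (rule summable_on_comparison_test[OF assms(1)])
  fix x assume "x \<in> A"
  then show "\<bar>u x\<bar> powr p \<le> \<bar>h x\<bar> powr p" using assms(2,3) by (simp add: powr_mono2)
qed simp

lemma summable_on_tail_sums_le:
  fixes h :: "'a \<Rightarrow> real"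
  assumes "h summable_on A" "\<And>k. 0 \<le> h k" "0 < e"
  shows "\<exists>K. finite K \<and> K \<subseteq> A \<and> (\<forall>F. finite F \<and> F \<subseteq> A - K \<longrightarrow> sum h F \<le> e)"
proof -
  have "\<forall>\<^sub>F F in finite_subsets_at_top A. dist (sum h F) (infsum h A) < e/2"
    by (rule tendstoD[OF infsum_tendsto[OF assms(1)]]) (use assms(3) in simp)
  then have "\<exists>K. finite K \<and> K \<subseteq> A \<and>
      (\<forall>Y. finite Y \<and> K \<subseteq> Y \<and> Y \<subseteq> A \<longrightarrow> dist (sum h Y) (infsum h A) < e/2)"
    by (simp only: eventually_finite_subsets_at_top)
  then obtain K where K: "finite K" "K \<subseteq> A"
    and close: "\<forall>Y. finite Y \<and> K \<subseteq> Y \<and> Y \<subseteq> A \<longrightarrow> dist (sum h Y) (infsum h A) < e/2"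
    by auto
  have "sum h F \<le> e" if F: "finite F" "F \<subseteq> A - K" for F
  proof -
    have "sum h (K \<union> F) = sum h K + sum h F" using F K by (intro sum.union_disjoint) auto
    moreover have "\<bar>sum h (K \<union> F) - infsum h A\<bar> < e/2" "\<bar>sum h K - infsum h A\<bar> < e/2"
      using close F K by (auto simp: dist_real_def)
    ultimately show ?thesis by linarith
  qed
  then show ?thesis using K by blast
qed

lemma abs_add_powr_le:
  fixes u v p :: real
  assumes p: "1 \<le> p"
  shows "\<bar>u + v\<bar> powr p \<le> 2 powr p * (\<bar>u\<bar> powr p + \<bar>v\<bar> powr p)"
proof -
  have "\<bar>u + v\<bar> powr p = \<bar>2 * (1/2 * u + (1 - 1/2) * v)\<bar> powr p"
    by simp
  also have "\<dots> = 2 powr p * \<bar>1/2 * u + (1 - 1/2) * v\<bar> powr p"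
    by (subst abs_mult, subst powr_mult) auto
  also have "\<dots> \<le> 2 powr p * (\<bar>u\<bar> powr p / 2 + \<bar>v\<bar> powr p / 2)"
    using abs_powr_convex_comb[OF p, of "1/2" u v] by (intro mult_left_mono) auto
  also have "\<dots> \<le> 2 powr p * (\<bar>u\<bar> powr p + \<bar>v\<bar> powr p)"
    using powr_ge_zero[of "\<bar>u\<bar>" p] powr_ge_zero[of "\<bar>v\<bar>" p]
    by (intro mult_left_mono) (linarith, simp)
  finally show ?thesis .
qed

lemma abs_add_powr_le_weighted:
  fixes u v a b p :: real
  assumes p: "1 \<le> p" and ab: "0 < a" "0 < b"
  shows "\<bar>u + v\<bar> powr p \<le>
    (a + b) powr p * (a / (a + b) / a powr p * \<bar>u\<bar> powr p + b / (a + b) / b powr p * \<bar>v\<bar> powr p)"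
proof -
  define t where "t = a / (a + b)"
  have t: "0 \<le> t" "t \<le> 1" "1 - t = b / (a + b)"
    using ab by (auto simp: t_def field_simps)
  have "t * (u / a) = u / (a + b)" "(1 - t) * (v / b) = v / (a + b)"
    using ab t(3) by (simp_all add: t_def)
  then have "u + v = (a + b) * (t * (u / a) + (1 - t) * (v / b))"
    using ab by (simp add: add_divide_distrib[symmetric])
  then have "\<bar>u + v\<bar> powr p = (a + b) powr p * \<bar>t * (u / a) + (1 - t) * (v / b)\<bar> powr p"
    using ab by (simp add: abs_mult powr_mult)
  also have "\<dots> \<le> (a + b) powr p * (t * \<bar>u / a\<bar> powr p + (1 - t) * \<bar>v / b\<bar> powr p)"
    using abs_powr_convex_comb[OF p t(1,2), of "u / a" "v / b"] by (intro mult_left_mono) auto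
  finally show ?thesis
    using ab t(3) by (simp add: t_def powr_divide)
qed

section \<open>The metric space \<open>\<ell>\<^sup>p(A)\<close>\<close>

locale lp_space =
  fixes p :: real and A :: "'a set"
  assumes one_le_p: "1 \<le> p"
begin

abbreviation X where "X \<equiv> lp p A"
abbreviation d where "d \<equiv> lp_dist p A"

definition norm_pow :: "('a \<Rightarrow> real) \<Rightarrow> real" where
  "norm_pow f = infsum (\<lambda>x. \<bar>f x\<bar> powr p) A"

lemma p_pos: "0 < p"
  using one_le_p by simp

lemma lp_iff: "f \<in> X \<longleftrightarrow> (\<forall>x. x \<notin> A \<longrightarrow> f x = 0) \<and> (\<lambda>x. \<bar>f x\<bar> powr p) summable_on A"
  by (simp add: lp_def)

lemma lp_summable: "f \<in> X \<Longrightarrow> (\<lambda>x. \<bar>f x\<bar> powr p) summable_on A"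
  by (simp add: lp_def)

lemma lp_vanishes: "f \<in> X \<Longrightarrow> x \<notin> A \<Longrightarrow> f x = 0"
  by (simp add: lp_def)

lemma lp_dominated:
  assumes "h \<in> X" "\<And>x. x \<notin> A \<Longrightarrow> u x = 0" "\<And>x. x \<in> A \<Longrightarrow> \<bar>u x\<bar> \<le> \<bar>h x\<bar>"
  shows "u \<in> X"
  using assms summable_on_powr_dominated[OF lp_summable[OF assms(1)] _ assms(3)] p_pos
  by (simp add: lp_iff)

lemma lp_add:
  assumes "f \<in> X" "h \<in> X"
  shows "(\<lambda>x. f x + h x) \<in> X"
proof -
  have "(\<lambda>x. 2 powr p * (\<bar>f x\<bar> powr p + \<bar>h x\<bar> powr p)) summable_on A"
    using lp_summable[OF assms(1)] lp_summable[OF assms(2)]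
    by (intro summable_on_cmult_right summable_on_add)
  then have "(\<lambda>x. \<bar>f x + h x\<bar> powr p) summable_on A"
    by (rule summable_on_comparison_test) (auto intro: abs_add_powr_le one_le_p)
  then show ?thesis
    using assms by (simp add: lp_iff)
qed

lemma lp_scale:
  assumes "f \<in> X"
  shows "(\<lambda>x. c * f x) \<in> X"
proof -
  have "(\<lambda>x. \<bar>c\<bar> powr p * \<bar>f x\<bar> powr p) summable_on A"
    using lp_summable[OF assms] by (rule summable_on_cmult_right)
  then show ?thesis
    using assms by (simp add: lp_iff abs_mult powr_mult)
qed

lemma lp_diff:
  assumes "f \<in> X" "h \<in> X"
  shows "(\<lambda>x. f x - h x) \<in> X"
  using lp_add[OF assms(1) lp_scale[OF assms(2), of "-1"]] by simp

lemma norm_pow_nonneg: "0 \<le> norm_pow f"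
  unfolding norm_pow_def by (intro infsum_nonneg) auto

lemma root_norm_pow_powr: "(norm_pow f powr (1/p)) powr p = norm_pow f"
  using p_pos norm_pow_nonneg[of f] by (simp add: powr_powr)

lemma norm_pow_scale: "norm_pow (\<lambda>x. c * f x) = \<bar>c\<bar> powr p * norm_pow f"
  unfolding norm_pow_def by (simp add: abs_mult powr_mult infsum_cmult_right')

lemma norm_pow_mono:
  assumes "h \<in> X" "\<And>x. x \<in> A \<Longrightarrow> \<bar>u x\<bar> \<le> \<bar>h x\<bar>"
  shows "norm_pow u \<le> norm_pow h"
proof -
  have "(\<lambda>x. \<bar>u x\<bar> powr p) summable_on A"
    using summable_on_powr_dominated[OF lp_summable[OF assms(1)] _ assms(2)] p_pos by simp
  then show ?thesis
    unfolding norm_pow_def using assms(2) p_pos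
    by (intro infsum_mono[OF _ lp_summable[OF assms(1)]] powr_mono2) auto
qed

lemma norm_pow_cong: "(\<And>x. x \<in> A \<Longrightarrow> f x = h x) \<Longrightarrow> norm_pow f = norm_pow h"
  unfolding norm_pow_def by (rule infsum_cong) simp

lemma abs_le_root_norm_pow:
  assumes "f \<in> X"
  shows "\<bar>f k\<bar> \<le> norm_pow f powr (1/p)"
proof (cases "k \<in> A")
  case True
  have "\<bar>f k\<bar> powr p \<le> norm_pow f"
    using finite_sum_le_infsum[OF lp_summable[OF assms], of "{k}"] True
    by (simp add: norm_pow_def)
  then have "(\<bar>f k\<bar> powr p) powr (1/p) \<le> norm_pow f powr (1/p)"
    using p_pos by (intro powr_mono2) auto
  then show ?thesis
    using p_pos by (simp add: powr_powr)
qed (simp add: lp_vanishes[OF assms])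

lemma lp_dist_eq: "d f h = norm_pow (\<lambda>x. f x - h x) powr (1/p)"
  by (simp add: lp_dist_def norm_pow_def)

lemma lp_dist_nonneg: "0 \<le> d f h"
  by (simp add: lp_dist_eq)

lemma lp_dist_self: "d f f = 0"
  by (simp add: lp_dist_def p_pos)

lemma abs_diff_le_lp_dist: "f \<in> X \<Longrightarrow> h \<in> X \<Longrightarrow> \<bar>f k - h k\<bar> \<le> d f h"
  using abs_le_root_norm_pow[OF lp_diff] by (simp add: lp_dist_eq)

lemma lp_dist_eq_0_imp_eq: "f \<in> X \<Longrightarrow> h \<in> X \<Longrightarrow> d f h = 0 \<Longrightarrow> f = h"
  using abs_diff_le_lp_dist by fastforce

lemma lp_dist_le_scaled:
  assumes "u \<in> X" "v \<in> X" "f \<in> X" "h \<in> X" "0 \<le> \<theta>"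
    and pointwise: "\<And>k. k \<in> A \<Longrightarrow> \<bar>u k - v k\<bar> \<le> \<theta> * \<bar>f k - h k\<bar>"
  shows "d u v \<le> \<theta> * d f h"
proof -
  have "norm_pow (\<lambda>k. u k - v k) \<le> norm_pow (\<lambda>k. \<theta> * (f k - h k))"
    using pointwise assms(5) by (intro norm_pow_mono lp_scale lp_diff assms(3,4)) (simp add: abs_mult)
  then have "d u v \<le> (\<theta> powr p * norm_pow (\<lambda>k. f k - h k)) powr (1/p)"
    using p_pos norm_pow_nonneg assms(5) by (simp add: lp_dist_eq norm_pow_scale powr_mono2)
  also have "\<dots> = \<theta> * d f h"
    using p_pos norm_pow_nonneg assms(5) by (simp add: lp_dist_eq powr_mult powr_powr)
  finally show ?thesis .
qed

lemma norm_pow_zero_imp_vanishes: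
  assumes "f \<in> X" "norm_pow f = 0" "k \<in> A"
  shows "f k = 0"
  using abs_le_root_norm_pow[OF assms(1), of k] assms(2) p_pos by simp

lemma minkowski:
  assumes u: "u \<in> X" and v: "v \<in> X"
  shows "norm_pow (\<lambda>x. u x + v x) powr (1/p) \<le> norm_pow u powr (1/p) + norm_pow v powr (1/p)"
proof -
  define a where "a = norm_pow u powr (1/p)"
  define b where "b = norm_pow v powr (1/p)"
  consider "a = 0" | "b = 0" | "0 < a" "0 < b"
    by (fastforce simp: a_def b_def)
  then show ?thesis
  proof cases
    case 1
    then have "norm_pow (\<lambda>x. u x + v x) = norm_pow v"
      using norm_pow_zero_imp_vanishes[OF u] p_pos by (intro norm_pow_cong) (simp add: a_def)
    then show ?thesis by simp
  next
    case 2
    then have "norm_pow (\<lambda>x. u x + v x) = norm_pow u"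
      using norm_pow_zero_imp_vanishes[OF v] p_pos by (intro norm_pow_cong) (simp add: b_def)
    then show ?thesis by simp
  next
    case 3
    define c1 where "c1 = (a + b) powr p * (a / (a + b) / a powr p)"
    define c2 where "c2 = (a + b) powr p * (b / (a + b) / b powr p)"
    have pointwise: "\<bar>u x + v x\<bar> powr p \<le> c1 * \<bar>u x\<bar> powr p + c2 * \<bar>v x\<bar> powr p" for x
      using abs_add_powr_le_weighted[OF one_le_p 3, of "u x" "v x"] by (simp add: c1_def c2_def algebra_simps)
    have su: "(\<lambda>x. c1 * \<bar>u x\<bar> powr p) summable_on A" and sv: "(\<lambda>x. c2 * \<bar>v x\<bar> powr p) summable_on A"
      using lp_summable[OF u] lp_summable[OF v] by (auto intro: summable_on_cmult_right)
    have "norm_pow (\<lambda>x. u x + v x) \<le> infsum (\<lambda>x. c1 * \<bar>u x\<bar> powr p + c2 * \<bar>v x\<bar> powr p) A"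
      unfolding norm_pow_def using lp_summable[OF lp_add[OF u v]] summable_on_add[OF su sv] pointwise
      by (intro infsum_mono) auto
    also have "\<dots> = c1 * norm_pow u + c2 * norm_pow v"
      using su sv by (simp add: infsum_add infsum_cmult_right' norm_pow_def)
    also have "\<dots> = (a + b) powr p * (a / (a + b) + b / (a + b))"
    proof -
      have "norm_pow u = a powr p" "norm_pow v = b powr p"
        by (simp_all add: a_def b_def root_norm_pow_powr)
      then show ?thesis
        using 3 by (simp add: c1_def c2_def distrib_left)
    qed
    also have "\<dots> = (a + b) powr p"
      using 3 by (simp add: add_divide_distrib[symmetric])
    finally have "norm_pow (\<lambda>x. u x + v x) powr (1/p) \<le> ((a + b) powr p) powr (1/p)"
      using p_pos norm_pow_nonneg by (intro powr_mono2) auto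
    also have "\<dots> = a + b"
      using 3 p_pos by (simp add: powr_powr)
    finally show ?thesis
      by (simp add: a_def b_def)
  qed
qed

lemma lp_dist_triangle:
  assumes "f \<in> X" "w \<in> X" "h \<in> X"
  shows "d f h \<le> d f w + d w h"
  using minkowski[OF lp_diff[OF assms(1,2)] lp_diff[OF assms(2,3)]] by (simp add: lp_dist_eq)

lemma lp_pointwise_limit:
  assumes f: "f \<in> X" and u: "\<And>m. u m \<in> X" and lim: "\<And>k. (\<lambda>m. u m k) \<longlonglongrightarrow> y k"
    and close: "\<forall>\<^sub>F m in sequentially. d f (u m) \<le> R"
  shows "y \<in> X \<and> d f y \<le> R"
proof -
  define w where "w k = \<bar>f k - y k\<bar> powr p" for k
  from close obtain M where M: "\<And>m. M \<le> m \<Longrightarrow> d f (u m) \<le> R"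
    unfolding eventually_sequentially by blast
  have R: "0 \<le> R"
    using M[of M] lp_dist_nonneg[of f "u M"] by linarith
  have finite_sums: "sum w F \<le> R powr p" if F: "finite F" "F \<subseteq> A" for F
  proof (rule LIMSEQ_le_const2)
    show "(\<lambda>m. \<Sum>k\<in>F. \<bar>f k - u m k\<bar> powr p) \<longlonglongrightarrow> sum w F"
      unfolding w_def using p_pos
      by (intro tendsto_sum tendsto_powr' tendsto_rabs tendsto_diff tendsto_const lim) auto
    show "\<exists>M. \<forall>m\<ge>M. (\<Sum>k\<in>F. \<bar>f k - u m k\<bar> powr p) \<le> R powr p"
    proof (intro exI allI impI)
      fix m assume "M \<le> m"
      have "(\<Sum>k\<in>F. \<bar>f k - u m k\<bar> powr p) \<le> norm_pow (\<lambda>k. f k - u m k)"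
        unfolding norm_pow_def using F lp_summable[OF lp_diff[OF f u]] by (intro finite_sum_le_infsum) auto
      also have "\<dots> = d f (u m) powr p"
        by (simp add: lp_dist_eq root_norm_pow_powr)
      also have "\<dots> \<le> R powr p"
        using M[OF \<open>M \<le> m\<close>] lp_dist_nonneg p_pos by (intro powr_mono2) auto
      finally show "(\<Sum>k\<in>F. \<bar>f k - u m k\<bar> powr p) \<le> R powr p" .
    qed
  qed
  have "w summable_on A"
    using finite_sums by (intro nonneg_bdd_above_summable_on bdd_aboveI[of _ "R powr p"]) (auto simp: w_def)
  moreover have "y k = 0" if "k \<notin> A" for k
    using LIMSEQ_unique[OF lim[of k]] lp_vanishes[OF u that] by simp
  ultimately have fy: "(\<lambda>k. f k - y k) \<in> X"
    using lp_vanishes[OF f] by (simp add: lp_iff w_def[abs_def])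
  have "d f y \<le> (R powr p) powr (1/p)"
    unfolding lp_dist_eq norm_pow_def using infsum_le_finite_sums[OF \<open>w summable_on A\<close> finite_sums] p_pos
    by (intro powr_mono2) (auto simp: w_def[abs_def] intro: infsum_nonneg)
  also have "\<dots> = R"
    using R p_pos by (simp add: powr_powr)
  finally show ?thesis
    using lp_diff[OF f fy] by simp
qed

lemma lp_cauchy_limit:
  assumes c: "\<And>n. c n \<in> X" and cauchy: "\<And>n m. n \<le> m \<Longrightarrow> d (c n) (c m) \<le> r n"
    and r: "r \<longlonglongrightarrow> 0"
  shows "\<exists>x\<in>X. (\<forall>n. d (c n) x \<le> r n) \<and> (\<forall>k. (\<lambda>m. c m k) \<longlonglongrightarrow> x k)"
proof -
  have "Cauchy (\<lambda>m. c m k)" for k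
  proof (rule metric_CauchyI)
    fix e :: real assume "0 < e"
    then have "\<forall>\<^sub>F n in sequentially. r n < e"
      using r by (rule order_tendstoD(2)[rotated])
    then obtain M where M: "\<And>n. M \<le> n \<Longrightarrow> r n < e"
      unfolding eventually_sequentially by blast
    have ordered: "dist (c m k) (c n k) < e" if "M \<le> m" "m \<le> n" for m n
      using abs_diff_le_lp_dist[OF c[of m] c[of n], of k] cauchy[OF \<open>m \<le> n\<close>] M[OF \<open>M \<le> m\<close>]
      by (simp add: dist_real_def)
    have "dist (c m k) (c n k) < e" if "M \<le> m" "M \<le> n" for m n
    proof (cases "m \<le> n")
      case False
      then show ?thesis
        using ordered[of n m] that by (simp add: dist_commute)
    qed (use ordered that in simp)
    then show "\<exists>M. \<forall>m\<ge>M. \<forall>n\<ge>M. dist (c m k) (c n k) < e"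
      by blast
  qed
  then have lim: "(\<lambda>m. c m k) \<longlonglongrightarrow> lim (\<lambda>m. c m k)" for k
    by (simp add: Cauchy_convergent_iff convergent_LIMSEQ_iff)
  have "\<forall>\<^sub>F m in sequentially. d (c n) (c m) \<le> r n" for n
    by (rule eventually_sequentiallyI[of n]) (rule cauchy)
  then have "(\<lambda>k. lim (\<lambda>m. c m k)) \<in> X \<and> d (c n) (\<lambda>k. lim (\<lambda>m. c m k)) \<le> r n" for n
    by (rule lp_pointwise_limit[OF c c lim])
  then show ?thesis
    using lim by blast
qed

lemma exists_lift_above_floor:
  assumes y: "y \<in> X" and f: "f \<in> X" and \<theta>: "0 \<le> \<theta>" and \<phi>: "\<And>k. 0 \<le> \<phi> k"
    and gap: "\<And>k. k \<in> A \<Longrightarrow> \<phi> k - \<bar>y k\<bar> \<le> \<theta> * \<bar>f k - y k\<bar>"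
  shows "\<exists>z\<in>X. (\<forall>k\<in>A. \<phi> k \<le> \<bar>z k\<bar>) \<and> d y z \<le> \<theta> * d f y"
proof -
  define z where "z k = (if k \<in> A \<and> \<bar>y k\<bar> < \<phi> k then (if 0 \<le> y k then \<phi> k else - \<phi> k) else y k)" for k
  have pointwise: "\<bar>z k - y k\<bar> \<le> \<bar>\<theta> * (f k - y k)\<bar>" if "k \<in> A" for k
    using gap[OF that] \<theta> by (auto simp: z_def abs_mult)
  have "(\<lambda>k. z k - y k) \<in> X"
    using pointwise by (intro lp_dominated[OF lp_scale[OF lp_diff[OF f y], of \<theta>]]) (auto simp: z_def)
  then have z: "z \<in> X"
    using lp_add[OF y] by force
  have "d y z \<le> \<theta> * d f y"
    using pointwise \<theta> by (intro lp_dist_le_scaled[OF y z f y]) (auto simp: abs_mult abs_minus_commute)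
  moreover have "\<forall>k\<in>A. \<phi> k \<le> \<bar>z k\<bar>"
    using \<phi> by (auto simp: z_def)
  ultimately show ?thesis
    using z by blast
qed

lemma exists_small_bump_profile:
  assumes \<phi>: "\<And>k. 0 \<le> \<phi> k" "(\<lambda>k. \<phi> k powr p) summable_on A" and L: "0 \<le> L" and e: "0 < e"
  shows "\<exists>K \<epsilon>. finite K \<and> 0 < \<epsilon> \<and>
    (\<forall>m. (\<forall>k. k \<notin> A \<longrightarrow> m k = 0) \<and> (\<forall>k\<in>A. \<bar>m k\<bar> \<le> (if k \<in> K then \<epsilon> else L * \<phi> k))
       \<longrightarrow> m \<in> X \<and> norm_pow m \<le> e powr p)"
proof -
  define \<eta> where "\<eta> = e powr p / (2 * (L powr p + 1))"
  have "0 < \<eta>"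
    using e by (simp add: \<eta>_def add_nonneg_pos)
  then obtain K where K: "finite K"
    and tail: "\<forall>F. finite F \<and> F \<subseteq> A - K \<longrightarrow> (\<Sum>k\<in>F. \<phi> k powr p) \<le> \<eta>"
    using summable_on_tail_sums_le[OF \<phi>(2)] \<phi>(1) powr_ge_zero by meson
  define \<epsilon> where "\<epsilon> = (e powr p / (2 * (card K + 1))) powr (1/p)"
  have \<epsilon>: "0 < \<epsilon>" "\<epsilon> powr p = e powr p / (2 * (card K + 1))"
    using e p_pos by (simp_all add: \<epsilon>_def powr_powr)
  have small: "m \<in> X \<and> norm_pow m \<le> e powr p"
    if m0: "\<forall>k. k \<notin> A \<longrightarrow> m k = 0" and m: "\<forall>k\<in>A. \<bar>m k\<bar> \<le> (if k \<in> K then \<epsilon> else L * \<phi> k)" for m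
  proof -
    have in_K: "\<bar>m k\<bar> \<le> \<epsilon>" if "k \<in> A" "k \<in> K" for k
      using bspec[OF m that(1)] that(2) by simp
    have out_K: "\<bar>m k\<bar> \<le> L * \<phi> k" if "k \<in> A" "k \<notin> K" for k
      using bspec[OF m that(1)] that(2) by simp
    have finite_sums: "(\<Sum>k\<in>F. \<bar>m k\<bar> powr p) \<le> e powr p" if F: "finite F" "F \<subseteq> A" for F
    proof -
      have "(\<Sum>k\<in>F \<inter> K. \<bar>m k\<bar> powr p) \<le> card K * \<epsilon> powr p"
      proof -
        have "(\<Sum>k\<in>F \<inter> K. \<bar>m k\<bar> powr p) \<le> card (F \<inter> K) * \<epsilon> powr p"
          using in_K F p_pos by (intro sum_bounded_above powr_mono2) auto
        also have "\<dots> \<le> card K * \<epsilon> powr p"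
          using K by (intro mult_right_mono) (auto intro: card_mono)
        finally show ?thesis .
      qed
      also have "\<dots> = card K / (card K + 1) * (e powr p / 2)"
        using \<epsilon>(2) by simp
      also have "\<dots> \<le> e powr p / 2"
        by (intro mult_left_le_one_le) auto
      finally have sum_in_K: "(\<Sum>k\<in>F \<inter> K. \<bar>m k\<bar> powr p) \<le> e powr p / 2" .
      have "(\<Sum>k\<in>F - K. \<bar>m k\<bar> powr p) \<le> (\<Sum>k\<in>F - K. L powr p * \<phi> k powr p)"
        using out_K F p_pos L \<phi>(1) by (intro sum_mono) (auto simp: powr_mult[symmetric] intro!: powr_mono2)
      also have "\<dots> \<le> L powr p * \<eta>"
        using F K tail[rule_format, of "F - K"] by (simp add: sum_distrib_left[symmetric] Diff_mono mult_left_mono)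
      also have "\<dots> = L powr p / (L powr p + 1) * (e powr p / 2)"
        by (simp add: \<eta>_def)
      also have "\<dots> \<le> e powr p / 2"
        by (intro mult_left_le_one_le) (auto simp: add_nonneg_pos)
      finally have sum_out_K: "(\<Sum>k\<in>F - K. \<bar>m k\<bar> powr p) \<le> e powr p / 2" .
      show ?thesis
        using sum_in_K sum_out_K sum.Int_Diff[OF F(1), of "\<lambda>k. \<bar>m k\<bar> powr p" K] by linarith
    qed
    then have "(\<lambda>k. \<bar>m k\<bar> powr p) summable_on A"
      by (intro nonneg_bdd_above_summable_on bdd_aboveI[of _ "e powr p"]) auto
    then show ?thesis
      using m0 infsum_le_finite_sums[OF _ finite_sums] by (simp add: lp_iff norm_pow_def)
  qed
  show ?thesis
    using small by (intro exI[of _ K] exI[of _ \<epsilon>]) (simp add: K \<epsilon>(1))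
qed


section \<open>Floor balls and porous sets\<close>

definition floor_ball :: "('a \<Rightarrow> real) \<Rightarrow> real \<Rightarrow> ('a \<Rightarrow> real) \<Rightarrow> ('a \<Rightarrow> real) set" where
  "floor_ball c r \<phi> = {f \<in> X. d c f \<le> r \<and> (\<forall>k\<in>A. \<phi> k \<le> \<bar>f k\<bar>)}"

definition admissible :: "('a \<Rightarrow> real) \<Rightarrow> real \<Rightarrow> ('a \<Rightarrow> real) \<Rightarrow> bool" where
  "admissible c r \<phi> \<longleftrightarrow> c \<in> X \<and> 0 < r \<and> (\<forall>k. 0 \<le> \<phi> k) \<and> (\<lambda>k. \<phi> k powr p) summable_on A
     \<and> (\<forall>k\<in>A. \<phi> k \<le> \<bar>c k\<bar>)"

text \<open>A uniform negation of \<open>\<lambda>\<close>-porosity of the floor ball at \<open>f\<close>.\<close>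

definition fills_holes_near :: "real \<Rightarrow> ('a \<Rightarrow> real) \<Rightarrow> real \<Rightarrow> ('a \<Rightarrow> real) \<Rightarrow> ('a \<Rightarrow> real) \<Rightarrow> bool" where
  "fills_holes_near lam c r \<phi> f \<longleftrightarrow> (\<exists>\<delta>>0. \<forall>y\<in>X. 0 < d f y \<and> d f y < \<delta> \<longrightarrow>
      (\<exists>z\<in>floor_ball c r \<phi>. d c z < r \<and> d y z < lam * d f y))"

lemma center_mem_floor_ball: "admissible c r \<phi> \<Longrightarrow> c \<in> floor_ball c r \<phi>"
  by (auto simp: admissible_def floor_ball_def lp_dist_self)

lemma fills_holes_near_above_raised_floor:
  assumes adm: "admissible c r \<phi>" and lam: "0 < lam" and f: "f \<in> X" and \<eta>: "0 < \<eta>" "d c f + 2 * \<eta> \<le> r"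
    and raised: "\<And>k. k \<in> A \<Longrightarrow> \<phi> k + \<eta> \<le> \<bar>f k\<bar> \<or> (1 + 1/lam) * \<phi> k \<le> \<bar>f k\<bar>"
  shows "fills_holes_near lam c r \<phi> f"
  unfolding fills_holes_near_def
proof (intro exI[of _ \<eta>] conjI ballI impI)
  fix y assume y: "y \<in> X" and t: "0 < d f y \<and> d f y < \<eta>"
  have c: "c \<in> X" and \<phi>: "\<And>k. 0 \<le> \<phi> k"
    using adm by (auto simp: admissible_def)
  txt \<open>Lifting \<open>y\<close> onto the floor costs \<open>\<phi> k - |y k|\<close> at each coordinate. Where \<open>f\<close> clears the floor
    by \<open>\<eta>\<close>, \<open>y\<close> is already above it; where \<open>|f k| \<ge> (1 + 1/\<lambda>) \<phi> k\<close>, the cost is at most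
    \<open>\<theta> |f k - y k|\<close> with \<open>\<theta> = \<lambda>/(1 + \<lambda>) < \<lambda>\<close>.\<close>
  define \<theta> where "\<theta> = lam / (1 + lam)"
  have \<theta>: "0 \<le> \<theta>" "\<theta> \<le> 1" "\<theta> < lam" "\<theta> * (1 + 1/lam) = 1"
  proof -
    have "0 < 1 + lam"
      using lam by simp
    then show "0 \<le> \<theta>" "\<theta> \<le> 1"
      using lam by (simp_all add: \<theta>_def)
    have "1 + 1/lam = (1 + lam) / lam"
      using lam by (simp add: field_simps)
    then show "\<theta> * (1 + 1/lam) = 1"
      using \<open>0 < 1 + lam\<close> lam by (simp add: \<theta>_def)
    have "lam / (1 + lam) < lam / 1"
      using lam by (intro divide_strict_left_mono) auto
    then show "\<theta> < lam"
      by (simp add: \<theta>_def)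
  qed
  have gap: "\<phi> k - \<bar>y k\<bar> \<le> \<theta> * \<bar>f k - y k\<bar>" if k: "k \<in> A" for k
    using raised[OF k]
  proof
    assume "\<phi> k + \<eta> \<le> \<bar>f k\<bar>"
    moreover have "\<bar>f k - y k\<bar> \<le> d f y"
      by (rule abs_diff_le_lp_dist[OF f y])
    ultimately have "\<phi> k \<le> \<bar>y k\<bar>"
      using t by linarith
    then show ?thesis
      using \<theta>(1) by (smt (verit) mult_nonneg_nonneg abs_ge_zero)
  next
    assume floor: "(1 + 1/lam) * \<phi> k \<le> \<bar>f k\<bar>"
    have "\<phi> k - \<bar>y k\<bar> \<le> \<theta> * ((1 + 1/lam) * \<phi> k) - \<theta> * \<bar>y k\<bar>"
      using \<theta>(2,4) mult_left_le_one_le[of "\<bar>y k\<bar>" \<theta>] \<theta>(1) by (simp add: mult.assoc[symmetric])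
    also have "\<dots> \<le> \<theta> * (\<bar>f k\<bar> - \<bar>y k\<bar>)"
      using floor \<theta>(1) by (simp add: right_diff_distrib mult_left_mono)
    also have "\<dots> \<le> \<theta> * \<bar>f k - y k\<bar>"
      using \<theta>(1) by (intro mult_left_mono abs_triangle_ineq2)
    finally show ?thesis .
  qed
  obtain z where z: "z \<in> X" "\<forall>k\<in>A. \<phi> k \<le> \<bar>z k\<bar>" and yz: "d y z \<le> \<theta> * d f y"
    using exists_lift_above_floor[OF y f \<theta>(1) \<phi> gap] by blast
  have "d y z < lam * d f y"
    using yz \<theta>(3) t by (smt (verit) mult_strict_right_mono)
  moreover have "d c z < r"
    using lp_dist_triangle[OF c f z(1)] lp_dist_triangle[OF f y z(1)] \<eta>(2) t \<theta>(2) yz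
      mult_left_le_one_le[of "d f y" \<theta>] \<theta>(1) by linarith
  ultimately show "\<exists>z\<in>floor_ball c r \<phi>. d c z < r \<and> d y z < lam * d f y"
    using z by (auto simp: floor_ball_def)
qed (use \<eta> in simp)

lemma exists_raised_center:
  assumes f0: "f0 \<in> X" and \<phi>: "\<And>k. 0 \<le> \<phi> k" "(\<lambda>k. \<phi> k powr p) summable_on A"
    and L: "0 \<le> L" and e: "0 < e"
  shows "\<exists>c K \<epsilon>. c \<in> X \<and> finite K \<and> 0 < \<epsilon> \<and> d f0 c \<le> e \<and>
    (\<forall>k\<in>A. \<bar>c k\<bar> = \<bar>f0 k\<bar> + (if k \<in> K then \<epsilon> else L * \<phi> k))"
proof -
  obtain K \<epsilon> where K: "finite K" and \<epsilon>: "0 < \<epsilon>"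
    and bump: "\<And>m. \<forall>k. k \<notin> A \<longrightarrow> m k = 0 \<Longrightarrow>
      \<forall>k\<in>A. \<bar>m k\<bar> \<le> (if k \<in> K then \<epsilon> else L * \<phi> k) \<Longrightarrow> m \<in> X \<and> norm_pow m \<le> e powr p"
    using exists_small_bump_profile[OF \<phi> L e] by blast
  define height where "height k = (if k \<in> K then \<epsilon> else L * \<phi> k)" for k
  have height: "0 \<le> height k" for k
    using \<epsilon> L \<phi>(1)[of k] by (simp add: height_def)
  define w where "w k = (if k \<in> A then (if 0 \<le> f0 k then height k else - height k) else 0)" for k
  have "\<forall>k. k \<notin> A \<longrightarrow> w k = 0" "\<forall>k\<in>A. \<bar>w k\<bar> \<le> height k"
    using height by (auto simp: w_def)
  then have w: "w \<in> X" "norm_pow w \<le> e powr p"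
    using bump[of w] by (simp_all add: height_def)
  define c where "c k = f0 k + w k" for k
  have "c \<in> X"
    unfolding c_def using lp_add[OF f0 w(1)] .
  moreover have "d f0 c \<le> e"
  proof -
    have "d f0 c = norm_pow w powr (1/p)"
      unfolding lp_dist_eq norm_pow_def c_def by simp
    also have "\<dots> \<le> (e powr p) powr (1/p)"
      using w(2) norm_pow_nonneg p_pos by (intro powr_mono2) auto
    finally show ?thesis
      using e p_pos by (simp add: powr_powr)
  qed
  moreover have "\<bar>c k\<bar> = \<bar>f0 k\<bar> + height k" if "k \<in> A" for k
    using that height[of k] by (auto simp: c_def w_def)
  ultimately show ?thesis
    using K \<epsilon> unfolding height_def by blast
qed

definition raised_floor :: "real \<Rightarrow> 'a set \<Rightarrow> ('a \<Rightarrow> real) \<Rightarrow> 'a \<Rightarrow> real" where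
  "raised_floor lam K \<phi> k = (if k \<in> K then \<phi> k else (1 + 1/lam) * \<phi> k)"

lemma raised_floor_bounds:
  assumes "0 < lam" "0 \<le> \<phi> k"
  shows "\<phi> k \<le> raised_floor lam K \<phi> k" "raised_floor lam K \<phi> k \<le> (1 + 1/lam) * \<phi> k"
  using assms by (simp_all add: raised_floor_def distrib_right)

lemma admissible_raised_floor:
  assumes adm: "admissible c r \<phi>" and lam: "0 < lam" and c': "c' \<in> X" and \<eta>: "0 < \<eta>"
    and below: "\<And>k. k \<in> A \<Longrightarrow> raised_floor lam K \<phi> k \<le> \<bar>c' k\<bar>"
  shows "admissible c' \<eta> (raised_floor lam K \<phi>)"
proof -
  have \<phi>: "\<And>k. 0 \<le> \<phi> k" "(\<lambda>k. \<phi> k powr p) summable_on A"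
    using adm by (auto simp: admissible_def)
  have bounds: "0 \<le> raised_floor lam K \<phi> k" "raised_floor lam K \<phi> k \<le> \<bar>(1 + 1/lam) * \<phi> k\<bar>" for k
    using raised_floor_bounds[of lam \<phi> k K] lam \<phi>(1)[of k] by auto
  have "(\<lambda>k. \<bar>(1 + 1/lam) * \<phi> k\<bar> powr p) summable_on A"
    using summable_on_cmult_right[OF \<phi>(2), of "(1 + 1/lam) powr p"] \<phi>(1) lam
    by (simp add: abs_mult powr_mult)
  then have "(\<lambda>k. \<bar>raised_floor lam K \<phi> k\<bar> powr p) summable_on A"
    by (rule summable_on_powr_dominated) (use bounds p_pos in auto)
  then show ?thesis
    using c' \<eta> below bounds(1) by (simp add: admissible_def)
qed

lemma raised_floor_ball_fills_holes:
  assumes adm: "admissible c r \<phi>" and lam: "0 < lam" and c': "c' \<in> X" and \<eta>: "0 < \<eta>" "d c c' + 3 * \<eta> \<le> r"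
    and margin: "\<And>k. k \<in> A \<Longrightarrow> k \<in> K \<Longrightarrow> \<phi> k + 2 * \<eta> \<le> \<bar>c' k\<bar>"
    and f: "f \<in> floor_ball c' \<eta> (raised_floor lam K \<phi>)"
  shows "f \<in> floor_ball c r \<phi> \<and> fills_holes_near lam c r \<phi> f"
proof -
  have c: "c \<in> X" and \<phi>: "\<And>k. 0 \<le> \<phi> k"
    using adm by (auto simp: admissible_def)
  have fX: "f \<in> X" and c'f: "d c' f \<le> \<eta>" and f_floor: "\<And>k. k \<in> A \<Longrightarrow> raised_floor lam K \<phi> k \<le> \<bar>f k\<bar>"
    using f by (auto simp: floor_ball_def)
  have cf: "d c f + 2 * \<eta> \<le> r"
    using lp_dist_triangle[OF c c' fX] c'f \<eta>(2) by linarith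
  have "\<phi> k + \<eta> \<le> \<bar>f k\<bar> \<or> (1 + 1/lam) * \<phi> k \<le> \<bar>f k\<bar>" if k: "k \<in> A" for k
  proof (cases "k \<in> K")
    case True
    have "\<bar>c' k\<bar> - \<bar>f k\<bar> \<le> \<eta>"
      using abs_diff_le_lp_dist[OF c' fX, of k] c'f abs_triangle_ineq2[of "c' k" "f k"] by linarith
    then show ?thesis
      using margin[OF k True] by auto
  next
    case False
    then show ?thesis
      using f_floor[OF k] by (simp add: raised_floor_def)
  qed
  then have "fills_holes_near lam c r \<phi> f"
    by (rule fills_holes_near_above_raised_floor[OF adm lam fX \<eta>(1) cf])
  moreover have "\<phi> k \<le> \<bar>f k\<bar>" if "k \<in> A" for k
    using f_floor[OF that] raised_floor_bounds(1)[of lam \<phi> k K] lam \<phi>[of k] by simp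
  ultimately show ?thesis
    using fX cf \<eta>(1) by (simp add: floor_ball_def)
qed

lemma exists_admissible_refinement:
  assumes adm: "admissible c r \<phi>" and lam: "0 < lam"
    and f0: "f0 \<in> floor_ball c r \<phi>" "d c f0 < r" and \<rho>: "0 < \<rho>"
  shows "\<exists>c' r' \<phi>'. admissible c' r' \<phi>' \<and> r' \<le> \<rho> \<and>
    (\<forall>f\<in>floor_ball c' r' \<phi>'. f \<in> floor_ball c r \<phi> \<and> d f0 f < \<rho> \<and> fills_holes_near lam c r \<phi> f)"
proof -
  have c: "c \<in> X" and \<phi>: "\<And>k. 0 \<le> \<phi> k" "(\<lambda>k. \<phi> k powr p) summable_on A"
    using adm by (auto simp: admissible_def)
  have f0X: "f0 \<in> X" and f0_floor: "\<And>k. k \<in> A \<Longrightarrow> \<phi> k \<le> \<bar>f0 k\<bar>"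
    using f0 by (auto simp: floor_ball_def)
  define s where "s = min \<rho> (r - d c f0)"
  have s: "0 < s" "s \<le> \<rho>" "d c f0 + s \<le> r"
    using \<rho> f0(2) by (auto simp: s_def)
  txt \<open>Off \<open>K\<close> the centre is raised along with the floor; on the finite set \<open>K\<close> the floor stays
    put and the centre is pushed \<open>\<epsilon>\<close> above it instead.\<close>
  obtain c' K \<epsilon> where c': "c' \<in> X" and \<epsilon>: "0 < \<epsilon>" and f0c': "d f0 c' \<le> s/4"
    and raised: "\<And>k. k \<in> A \<Longrightarrow> \<bar>c' k\<bar> = \<bar>f0 k\<bar> + (if k \<in> K then \<epsilon> else 1/lam * \<phi> k)"
    using exists_raised_center[OF f0X \<phi>, of "1/lam" "s/4"] lam s(1) by auto
  define \<eta> where "\<eta> = min (\<epsilon>/2) (s/4)"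
  have \<eta>: "0 < \<eta>" "\<eta> \<le> \<epsilon>/2" "\<eta> \<le> s/4"
    using \<epsilon> s(1) by (auto simp: \<eta>_def)
  have "raised_floor lam K \<phi> k \<le> \<bar>c' k\<bar>" if "k \<in> A" for k
    using raised[OF that] f0_floor[OF that] \<epsilon> by (cases "k \<in> K") (simp_all add: raised_floor_def algebra_simps)
  then have "admissible c' \<eta> (raised_floor lam K \<phi>)"
    by (rule admissible_raised_floor[OF adm lam c' \<eta>(1)])
  moreover have "d c c' + 3 * \<eta> \<le> r"
    using lp_dist_triangle[OF c f0X c'] f0c' s(3) \<eta>(3) by linarith
  moreover have "\<phi> k + 2 * \<eta> \<le> \<bar>c' k\<bar>" if "k \<in> A" "k \<in> K" for k
    using raised[OF that(1)] f0_floor[OF that(1)] that(2) \<eta>(2) by simp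
  moreover have "d f0 f < \<rho>" if "f \<in> floor_ball c' \<eta> (raised_floor lam K \<phi>)" for f
    using that lp_dist_triangle[OF f0X c', of f] f0c' \<eta>(3) s(1,2) by (auto simp: floor_ball_def)
  ultimately show ?thesis
    using raised_floor_ball_fills_holes[OF adm lam c' \<eta>(1)] \<eta>(3) s(1,2)
    by (intro exI[of _ c'] exI[of _ \<eta>] exI[of _ "raised_floor lam K \<phi>"]) auto
qed

lemma porous_has_hole_in_floor_ball:
  assumes fill: "fills_holes_near lam c r \<phi> x" and E: "porous X d lam E" and xE: "x \<in> E"
  shows "\<exists>z\<in>floor_ball c r \<phi>. d c z < r \<and> (\<exists>\<rho>>0. \<forall>f\<in>X. d z f < \<rho> \<longrightarrow> f \<notin> E)"
proof -
  have x: "x \<in> X"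
    using E xE by (auto simp: porous_def)
  obtain \<delta> where "0 < \<delta>" and fills: "\<And>y. y \<in> X \<Longrightarrow> 0 < d x y \<Longrightarrow> d x y < \<delta> \<Longrightarrow>
      \<exists>z\<in>floor_ball c r \<phi>. d c z < r \<and> d y z < lam * d x y"
    using fill unfolding fills_holes_near_def by blast
  then obtain y where y: "y \<in> X" "d x y < \<delta>" "y \<noteq> x"
    and hole: "{z \<in> X. d y z < lam * d x y} \<inter> E = {}"
    using E xE unfolding porous_def porous_at_def by blast
  have "0 < d x y"
    using lp_dist_eq_0_imp_eq[OF x y(1)] lp_dist_nonneg[of x y] y(3) by force
  then obtain z where z: "z \<in> floor_ball c r \<phi>" "d c z < r" and yz: "d y z < lam * d x y"
    using fills[OF y(1) _ y(2)] by blast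
  have "f \<notin> E" if "f \<in> X" "d z f < lam * d x y - d y z" for f
    using lp_dist_triangle[OF y(1) _ that(1), of z] z(1) that hole by (auto simp: floor_ball_def)
  moreover have "0 < lam * d x y - d y z"
    using yz by simp
  ultimately show ?thesis
    using z by blast
qed

lemma exists_admissible_avoiding_porous:
  assumes adm: "admissible c r \<phi>" and lam: "0 < lam" and E: "porous X d lam E"
  shows "\<exists>c' r' \<phi>'. admissible c' r' \<phi>' \<and> r' \<le> r/2 \<and>
    floor_ball c' r' \<phi>' \<subseteq> floor_ball c r \<phi> \<and> floor_ball c' r' \<phi>' \<inter> E = {}"
proof -
  have r: "0 < r"
    using adm by (simp add: admissible_def)
  obtain c1 r1 \<phi>1 where adm1: "admissible c1 r1 \<phi>1" and r1: "r1 \<le> r/2"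
    and sub1: "\<And>f. f \<in> floor_ball c1 r1 \<phi>1 \<Longrightarrow> f \<in> floor_ball c r \<phi> \<and> fills_holes_near lam c r \<phi> f"
    using exists_admissible_refinement[OF adm lam center_mem_floor_ball[OF adm], of "r/2"] r
    by (auto simp: lp_dist_self)
  show ?thesis
  proof (cases "floor_ball c1 r1 \<phi>1 \<inter> E = {}")
    case True
    then show ?thesis
      using adm1 r1 sub1 by blast
  next
    case False
    then obtain x where "x \<in> floor_ball c1 r1 \<phi>1" "x \<in> E"
      by blast
    then obtain z \<rho> where z: "z \<in> floor_ball c r \<phi>" "d c z < r" and \<rho>: "0 < \<rho>"
      and hole: "\<forall>f\<in>X. d z f < \<rho> \<longrightarrow> f \<notin> E"
      using porous_has_hole_in_floor_ball[OF _ E] sub1 by blast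
    obtain c2 r2 \<phi>2 where "admissible c2 r2 \<phi>2" "r2 \<le> r/2"
      and sub2: "\<And>f. f \<in> floor_ball c2 r2 \<phi>2 \<Longrightarrow> f \<in> floor_ball c r \<phi> \<and> d z f < min \<rho> (r/2)"
      using exists_admissible_refinement[OF adm lam z, of "min \<rho> (r/2)"] \<rho> r by auto
    moreover have "floor_ball c2 r2 \<phi>2 \<inter> E = {}"
      using hole sub2 by (auto simp: floor_ball_def)
    ultimately show ?thesis
      using sub2 by (intro exI[of _ c2] exI[of _ r2] exI[of _ \<phi>2]) auto
  qed
qed

lemma nested_floor_balls_have_common_point:
  assumes adm: "\<And>n. admissible (c n) (r n) (\<phi> n)"
    and nested: "\<And>n. floor_ball (c (Suc n)) (r (Suc n)) (\<phi> (Suc n)) \<subseteq> floor_ball (c n) (r n) (\<phi> n)"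
    and r: "r \<longlonglongrightarrow> 0"
  shows "\<exists>x. \<forall>n. x \<in> floor_ball (c n) (r n) (\<phi> n)"
proof -
  have centers: "c m \<in> floor_ball (c n) (r n) (\<phi> n)" if "n \<le> m" for n m
    using center_mem_floor_ball[OF adm] lift_Suc_antimono_le[of "\<lambda>n. floor_ball (c n) (r n) (\<phi> n)", OF nested that]
    by blast
  obtain x where x: "x \<in> X" "\<And>n. d (c n) x \<le> r n" and lim: "\<And>k. (\<lambda>m. c m k) \<longlonglongrightarrow> x k"
    using lp_cauchy_limit[of c r] adm centers r by (auto simp: admissible_def floor_ball_def)
  have "\<phi> n k \<le> \<bar>x k\<bar>" if "k \<in> A" for n k
  proof (rule LIMSEQ_le_const[OF tendsto_rabs[OF lim]])
    show "\<exists>N. \<forall>m\<ge>N. \<phi> n k \<le> \<bar>c m k\<bar>"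
      using centers that by (auto simp: floor_ball_def)
  qed
  then show ?thesis
    using x by (auto simp: floor_ball_def)
qed

lemma exists_point_avoiding_porous_sets:
  fixes E :: "nat \<Rightarrow> ('a \<Rightarrow> real) set"
  assumes adm: "admissible c r \<phi>" and lam: "0 < lam" and E: "\<And>n. porous X d lam (E n)"
  shows "\<exists>x\<in>floor_ball c r \<phi>. \<forall>n. x \<notin> E n"
proof -
  let ?ball = "\<lambda>(c, r, \<phi>). floor_ball c r \<phi>"
  let ?P = "\<lambda>n (c', r', \<phi>'). admissible c' r' \<phi>' \<and> r' \<le> r / 2 ^ n \<and> (n = 0 \<longrightarrow> (c', r', \<phi>') = (c, r, \<phi>))"
  let ?Q = "\<lambda>n s s'. ?ball s' \<subseteq> ?ball s \<and> ?ball s' \<inter> E n = {}"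
  have "\<exists>S. \<forall>n. ?P n (S n) \<and> ?Q n (S n) (S (Suc n))"
  proof (rule dependent_nat_choice)
    show "\<exists>s. ?P 0 s"
      using adm by (intro exI[of _ "(c, r, \<phi>)"]) simp
  next
    fix s n assume P: "?P n s"
    obtain c' r' \<phi>' where s: "s = (c', r', \<phi>')"
      by (cases s)
    then have "admissible c' r' \<phi>'" "r' \<le> r / 2 ^ n"
      using P by simp_all
    then obtain c'' r'' \<phi>'' where "admissible c'' r'' \<phi>''" and r'': "r'' \<le> r' / 2"
      and "floor_ball c'' r'' \<phi>'' \<subseteq> floor_ball c' r' \<phi>'" "floor_ball c'' r'' \<phi>'' \<inter> E n = {}"
      using exists_admissible_avoiding_porous[OF _ lam E[of n]] by meson
    moreover have "r'' \<le> r / 2 ^ Suc n"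
      using r'' divide_right_mono[OF \<open>r' \<le> r / 2 ^ n\<close>, of 2] by simp
    ultimately show "\<exists>s'. ?P (Suc n) s' \<and> ?Q n s s'"
      using s by (intro exI[of _ "(c'', r'', \<phi>'')"]) simp
  qed
  then obtain S where S_all: "\<forall>n. ?P n (S n) \<and> ?Q n (S n) (S (Suc n))" ..
  have S: "?P n (S n)" "?Q n (S n) (S (Suc n))" for n
    using spec[OF S_all, of n] by (rule conjunct1, rule conjunct2)
  define cs where "cs n = fst (S n)" for n
  define rs where "rs n = fst (snd (S n))" for n
  define \<phi>s where "\<phi>s n = snd (snd (S n))" for n
  have S_eq: "S n = (cs n, rs n, \<phi>s n)" for n
    by (simp add: cs_def rs_def \<phi>s_def)
  have "rs \<longlonglongrightarrow> 0"
  proof (rule tendsto_sandwich[of "\<lambda>_. 0" _ _ "\<lambda>n. r / 2 ^ n"])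
    show "\<forall>\<^sub>F n in sequentially. 0 \<le> rs n" "\<forall>\<^sub>F n in sequentially. rs n \<le> r / 2 ^ n"
      using S(1) by (auto simp: S_eq admissible_def less_imp_le)
    show "(\<lambda>n. r / 2 ^ n) \<longlonglongrightarrow> 0"
      by (intro LIMSEQ_divide_realpow_zero) simp
  qed simp
  then obtain x where x: "\<And>n. x \<in> floor_ball (cs n) (rs n) (\<phi>s n)"
    using nested_floor_balls_have_common_point[of cs rs \<phi>s] S by (auto simp: S_eq)
  have "x \<notin> E n" for n
    using x[of "Suc n"] S(2)[of n] by (auto simp: S_eq)
  moreover have "x \<in> floor_ball c r \<phi>"
    using x[of 0] S(1)[of 0] by (simp add: S_eq)
  ultimately show ?thesis
    by blast
qed

end

theorem corollary2p6:
  fixes p :: real and A :: "'a set" and g :: "'a \<Rightarrow> real"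
  assumes "p \<ge> 1" and "A \<noteq> {}" and "g \<in> lp p A"
  shows "\<forall>lam. 0 < lam \<and> lam < 1 \<longrightarrow>
           \<not> sigma_porous (lp p A) (lp_dist p A) lam {f \<in> lp p A. \<forall>x\<in>A. \<bar>f x\<bar> \<ge> \<bar>g x\<bar>}"
proof (intro allI impI notI)
  fix lam :: real
  assume lam: "0 < lam \<and> lam < 1"
    and "sigma_porous (lp p A) (lp_dist p A) lam {f \<in> lp p A. \<forall>x\<in>A. \<bar>f x\<bar> \<ge> \<bar>g x\<bar>}"
      (is "sigma_porous _ _ _ ?\<Gamma>")
  interpret lp_space p A
    using assms(1) by unfold_locales
  obtain E :: "nat \<Rightarrow> ('a \<Rightarrow> real) set" where E: "\<And>n. porous X d lam (E n)" and cover: "?\<Gamma> = (\<Union>n. E n)"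
    using \<open>sigma_porous X d lam ?\<Gamma>\<close> unfolding sigma_porous_def by blast
  have "admissible g 1 (\<lambda>k. \<bar>g k\<bar>)"
    using assms(3) by (simp add: admissible_def lp_summable)
  then obtain x where "x \<in> floor_ball g 1 (\<lambda>k. \<bar>g k\<bar>)" "\<forall>n. x \<notin> E n"
    using exists_point_avoiding_porous_sets E lam by meson
  then show False
    using cover by (auto simp: floor_ball_def)
qed

end
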